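(* If $\sigma$ and $\pi$ are permutations with the same number of descents, then $|\mu(\sigma,\pi)|$ is at most the number of occurrences of $\sigma$ in $\pi$.
   Context: A permutation of length $n$ is an arrangement of $1,\dots,n$. An occurrence of $\sigma$ in $\pi$ is a set of positions of $\pi$ whose letters, read left to right, are in the same relative order as $\sigma$. The permutation poset is ordered by $\sigma\le\pi$ iff there is an occurrence of $\sigma$ in $\pi$. A descent is an index $i$ with $\pi_i>\pi_{i+1}$. $\mu$ is the Möbius function of this poset: $\mu(a,a)=1$, $\mu(a,b)=-\sum_{a\le z<b}\mu(a,z)$ for $a<b$, $\mu(a,b)=0$ if $a\not\le b$. *)

theory Defs
  imports Main
begin

text \<open>Permutations of length n are represented as lists of naturals that are
  arrangements of 1..n (positions 0-based).\<close>

definition is_perm :: "nat list \<Rightarrow> bool" where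
  "is_perm xs \<longleftrightarrow> distinct xs \<and> set xs = {1..length xs}"

definition order_iso :: "nat list \<Rightarrow> nat list \<Rightarrow> bool" where
  "order_iso xs ys \<longleftrightarrow> length xs = length ys \<and>
     (\<forall>i<length xs. \<forall>j<length xs. (xs ! i < xs ! j) = (ys ! i < ys ! j))"

definition subword :: "nat list \<Rightarrow> nat set \<Rightarrow> nat list" where
  "subword pi S = map (\<lambda>i. pi ! i) (sorted_list_of_set S)"

definition occurrences :: "nat list \<Rightarrow> nat list \<Rightarrow> nat set set" where
  "occurrences sigma pi =
     {S. S \<subseteq> {0..<length pi} \<and> order_iso (subword pi S) sigma}"

definition num_occ :: "nat list \<Rightarrow> nat list \<Rightarrow> nat" where
  "num_occ sigma pi = card (occurrences sigma pi)"

definition patt_le :: "nat list \<Rightarrow> nat list \<Rightarrow> bool" where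
  "patt_le sigma pi \<longleftrightarrow> is_perm sigma \<and> is_perm pi \<and> occurrences sigma pi \<noteq> {}"

definition patt_less :: "nat list \<Rightarrow> nat list \<Rightarrow> bool" where
  "patt_less sigma pi \<longleftrightarrow> patt_le sigma pi \<and> sigma \<noteq> pi"

definition descents :: "nat list \<Rightarrow> nat" where
  "descents pi = card {i. Suc i < length pi \<and> pi ! i > pi ! Suc i}"

lemma patt_le_length: "patt_le s p \<Longrightarrow> length s \<le> length p"
proof -
  assume "patt_le s p"
  then obtain S where S: "S \<subseteq> {0..<length p}" "order_iso (subword p S) s"
    unfolding patt_le_def occurrences_def by auto
  have "finite S" using S(1) finite_subset by blast
  have "length s = card S" using S(2) \<open>finite S\<close>
    by (simp add: order_iso_def subword_def)
  also have "\<dots> \<le> length p" using S(1) card_mono[of "{0..<length p}" S] by simp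
  finally show ?thesis .
qed

text \<open>The guard length z < length b is automatically satisfied by every z < b (a proper
  pattern is shorter); it only serves to make the recursion visibly well-founded.\<close>
function mu :: "nat list \<Rightarrow> nat list \<Rightarrow> int" where
  "mu a b = (if a = b then 1
             else if patt_le a b then
               - (\<Sum>z\<in>{z. patt_le a z \<and> patt_less z b \<and> length z < length b}. mu a z)
             else 0)"
  by pat_completeness auto
termination
  by (relation "measure (\<lambda>(a,b). length b)") auto

end

theory Submission
  imports Defs "HOL-Library.Sublist" "HOL-Library.Product_Lexorder"
begin

text \<open>Label each value of a permutation \<open>\<pi>\<close> by the index of the ascending run of \<open>\<pi>\<close>
  containing it. The resulting word over \<open>{0..d}\<close>, \<open>d = descents \<pi>\<close>, determines \<open>\<pi>\<close>
  (sort the values by (label, value)); restricted to an occurrence it becomes a labelling of the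
  pattern that is a subsequence of the word, and every subsequence of the word arises this way.
  A labelling with letters at most \<open>d\<close> allows at most \<open>d\<close> descents, and exactly \<open>d\<close> only
  if it is the run word itself. So when \<open>\<sigma>\<close> and \<open>\<pi>\<close> have the same number of descents,
  run words map the interval \<open>[\<sigma>, \<pi>]\<close> isomorphically onto an interval of the subsequence
  order on words. There the Moebius function obeys a recursion in the first letter that bounds
  its absolute value by the number of embeddings of one word into the other, and distinct
  embeddings of run words yield distinct occurrences of \<open>\<sigma>\<close> in \<open>\<pi>\<close>.\<close>

section \<open>Moebius function of the subsequence order\<close>

fun subseq_mu :: "'a list \<Rightarrow> 'a list \<Rightarrow> int" where
  "subseq_mu u [] = (if u = [] then 1 else 0)"
| "subseq_mu u (a # w) =
     (case u of [] \<Rightarrow> 0 | b # u' \<Rightarrow> if b = a then subseq_mu u' w else 0)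
     - (if w \<noteq> [] \<and> hd w = a then 0 else subseq_mu u w)"

lemma subseq_mu_nonzero_imp_subseq: "subseq_mu u w \<noteq> 0 \<Longrightarrow> subseq u w"
proof (induction w arbitrary: u)
  case Nil
  then show ?case by (auto split: if_splits)
next
  case (Cons a w)
  show ?case
  proof (cases "subseq_mu u w \<noteq> 0 \<and> \<not> (w \<noteq> [] \<and> hd w = a)")
    case True
    then show ?thesis using Cons.IH by auto
  next
    case False
    then have "(case u of [] \<Rightarrow> 0 | b # u' \<Rightarrow> if b = a then subseq_mu u' w else 0) \<noteq> 0"
      using Cons.prems by (auto split: if_splits)
    then obtain u' where "u = a # u'" "subseq_mu u' w \<noteq> 0"
      by (auto split: list.splits if_splits)
    then show ?thesis using Cons.IH by auto
  qed
qed

lemma finite_subseqs: "finite {z. subseq z w}"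
  by (metis List.finite_set set_subseqs_eq)

lemma subseqs_Cons_eq: "{z. subseq z (a # w)} = {z. subseq z w} \<union> (\<lambda>z. a # z) ` {z. subseq z w}"
proof (intro set_eqI iffI)
  fix z
  assume "z \<in> {z. subseq z (a # w)}"
  then show "z \<in> {z. subseq z w} \<union> (\<lambda>z. a # z) ` {z. subseq z w}"
    by (cases z) (auto split: if_splits)
qed auto

lemma subseqs_inter_Cons_image:
  "{z. subseq z w} \<inter> (\<lambda>z. a # z) ` {z. subseq z w} = {z. subseq z w} \<inter> {z. z \<noteq> [] \<and> hd z = a}"
proof (intro set_eqI iffI)
  fix z
  assume "z \<in> {z. subseq z w} \<inter> {z. z \<noteq> [] \<and> hd z = a}"
  then obtain z' where z: "z = a # z'" "subseq z w" by (cases z) auto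
  then have "subseq z' w" using subseq_Cons' by simp
  with z show "z \<in> {z. subseq z w} \<inter> (\<lambda>z. a # z) ` {z. subseq z w}" by simp
next
  fix z
  assume "z \<in> {z. subseq z w} \<inter> (\<lambda>z. a # z) ` {z. subseq z w}"
  then show "z \<in> {z. subseq z w} \<inter> {z. z \<noteq> [] \<and> hd z = a}" by auto
qed

text \<open>The recursion of \<open>subseq_mu\<close> is designed so that summing it over the subsequences of
  \<open>a # w\<close> telescopes: the subsequences starting with \<open>a\<close> are counted twice by the
  decomposition \<open>subseqs_Cons_eq\<close>, and the correction term removes exactly those.\<close>

lemma sum_subseq_mu_Cons:
  "(\<Sum>z | subseq z (a # w). subseq_mu u z) =
     (case u of [] \<Rightarrow> 0 | b # u' \<Rightarrow> if b = a then \<Sum>z | subseq z w. subseq_mu u' z else 0)"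
proof -
  let ?A = "{z. subseq z w}"
  let ?H = "{z. z \<noteq> [] \<and> hd z = a}"
  let ?c = "\<lambda>z. case u of [] \<Rightarrow> 0 | b # u' \<Rightarrow> if b = a then subseq_mu u' z else 0"
  have fin: "finite ?A" "finite ((\<lambda>z. a # z) ` ?A)" by (simp_all add: finite_subseqs)
  have "sum (subseq_mu u) (?A \<union> (\<lambda>z. a # z) ` ?A) + sum (subseq_mu u) (?A \<inter> (\<lambda>z. a # z) ` ?A)
      = sum (subseq_mu u) ?A + sum (subseq_mu u) ((\<lambda>z. a # z) ` ?A)"
    by (rule sum.union_inter[OF fin])
  then have split: "(\<Sum>z | subseq z (a # w). subseq_mu u z) + sum (subseq_mu u) (?A \<inter> ?H)
      = sum (subseq_mu u) ?A + sum (subseq_mu u) ((\<lambda>z. a # z) ` ?A)"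
    by (simp only: subseqs_Cons_eq subseqs_inter_Cons_image)
  have shift: "sum (subseq_mu u) ((\<lambda>z. a # z) ` ?A) = (\<Sum>z\<in>?A. subseq_mu u (a # z))"
    by (subst sum.reindex) (auto simp: inj_on_def)
  have "\<And>z. subseq_mu u (a # z) = ?c z - (if z \<in> ?H then 0 else subseq_mu u z)"
    by (simp only: subseq_mu.simps mem_Collect_eq)
  then have "(\<Sum>z\<in>?A. subseq_mu u (a # z))
      = (\<Sum>z\<in>?A. ?c z - (if z \<in> ?H then 0 else subseq_mu u z))"
    by (rule sum.cong[OF refl])
  then have rec: "(\<Sum>z\<in>?A. subseq_mu u (a # z))
      = sum ?c ?A - (\<Sum>z\<in>?A. if z \<in> ?H then 0 else subseq_mu u z)"
    by (simp only: sum_subtractf)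
  have "(\<Sum>z\<in>?A. if z \<in> ?H then 0 else subseq_mu u z) = sum (subseq_mu u) (?A - ?H)"
    by (simp add: sum.If_cases[OF fin(1)] Diff_eq)
  moreover have "sum (subseq_mu u) ?A = sum (subseq_mu u) (?A \<inter> ?H) + sum (subseq_mu u) (?A - ?H)"
    by (rule sum.Int_Diff[OF fin(1)])
  moreover have "sum ?c ?A =
      (case u of [] \<Rightarrow> 0 | b # u' \<Rightarrow> if b = a then \<Sum>z | subseq z w. subseq_mu u' z else 0)"
    by (cases u) simp_all
  ultimately show ?thesis using split shift rec by linarith
qed

lemma sum_subseq_mu: "(\<Sum>z | subseq z w. subseq_mu u z) = (if u = w then 1 else 0)"
proof (induction w arbitrary: u)
  case Nil
  have "{z. subseq z ([] :: 'a list)} = {[]}" by auto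
  then show ?case by simp
next
  case (Cons a w)
  then show ?case by (cases u) (auto simp: sum_subseq_mu_Cons)
qed

lemma sum_subseq_mu_interval:
  "(\<Sum>z | subseq u z \<and> subseq z w. subseq_mu u z) = (if u = w then 1 else 0)"
proof -
  have "(\<Sum>z | subseq u z \<and> subseq z w. subseq_mu u z) = (\<Sum>z | subseq z w. subseq_mu u z)"
    by (rule sum.mono_neutral_left) (auto simp: finite_subseqs dest: subseq_mu_nonzero_imp_subseq)
  also have "\<dots> = (if u = w then 1 else 0)" by (rule sum_subseq_mu)
  finally show ?thesis .
qed

lemma subseq_mu_refl: "subseq_mu w w = 1"
proof -
  have "{z. subseq w z \<and> subseq z w} = {w}" by (auto intro: subseq_order.antisym)
  then show ?thesis using sum_subseq_mu_interval[of w w] by simp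
qed

lemma subseq_mu_rec:
  assumes "u \<noteq> w" "subseq u w"
  shows "subseq_mu u w = - (\<Sum>z | subseq u z \<and> subseq z w \<and> z \<noteq> w. subseq_mu u z)"
proof -
  have "{z. subseq u z \<and> subseq z w} = insert w {z. subseq u z \<and> subseq z w \<and> z \<noteq> w}"
    using assms(2) by auto
  moreover have "finite {z. subseq u z \<and> subseq z w \<and> z \<noteq> w}"
    by (rule finite_subset[OF _ finite_subseqs[of w]]) auto
  ultimately show ?thesis using sum_subseq_mu_interval[of u w] assms(1) by simp
qed

definition subseq_embedding :: "(nat \<Rightarrow> nat) \<Rightarrow> 'a list \<Rightarrow> 'a list \<Rightarrow> bool" where
  "subseq_embedding h u w \<longleftrightarrow> (\<forall>i j. i < j \<and> j < length u \<longrightarrow> h i < h j)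
     \<and> (\<forall>k<length u. h k < length w \<and> u ! k = w ! h k)"

definition subseq_embeddings :: "'a list \<Rightarrow> 'a list \<Rightarrow> nat set set" where
  "subseq_embeddings u w = {h ` {0..<length u} | h. subseq_embedding h u w}"

lemma subseq_embedding_Cons:
  "subseq_embedding h u w \<Longrightarrow> subseq_embedding (\<lambda>k. Suc (h k)) u (a # w)"
  unfolding subseq_embedding_def by auto

lemma subseq_embedding_Cons2:
  assumes "subseq_embedding h u w"
  shows "subseq_embedding (\<lambda>k. case k of 0 \<Rightarrow> 0 | Suc k \<Rightarrow> Suc (h k)) (a # u) (a # w)"
  unfolding subseq_embedding_def
proof (intro conjI allI impI)
  fix i j
  assume "i < j \<and> j < length (a # u)"
  then show "(case i of 0 \<Rightarrow> 0 | Suc k \<Rightarrow> Suc (h k)) < (case j of 0 \<Rightarrow> 0 | Suc k \<Rightarrow> Suc (h k))"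
    using assms unfolding subseq_embedding_def by (cases i; cases j) auto
next
  fix k
  assume "k < length (a # u)"
  then show "(case k of 0 \<Rightarrow> 0 | Suc k \<Rightarrow> Suc (h k)) < length (a # w)"
    and "(a # u) ! k = (a # w) ! (case k of 0 \<Rightarrow> 0 | Suc k \<Rightarrow> Suc (h k))"
    using assms unfolding subseq_embedding_def by (cases k; simp)+
qed

lemma subseq_imp_embedding: "subseq u w \<Longrightarrow> \<exists>h. subseq_embedding h u w"
proof (induction rule: list_emb.induct)
  case (list_emb_Nil ys)
  then show ?case by (simp add: subseq_embedding_def)
next
  case (list_emb_Cons xs ys y)
  then obtain h where "subseq_embedding h xs ys" by blast
  then show ?case by (blast intro: subseq_embedding_Cons)
next
  case (list_emb_Cons2 x y xs ys)
  then show ?case using subseq_embedding_Cons2 by fastforce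
qed

lemma subseq_embedding_imp_subseq: "subseq_embedding h u w \<Longrightarrow> subseq u w"
proof (induction u arbitrary: h w)
  case Nil
  then show ?case by simp
next
  case (Cons a u)
  let ?i = "h 0"
  have h: "\<And>i j. i < j \<Longrightarrow> j \<le> length u \<Longrightarrow> h i < h j"
    and hk: "\<And>k. k \<le> length u \<Longrightarrow> h k < length w \<and> (a # u) ! k = w ! h k"
    using Cons.prems unfolding subseq_embedding_def by auto
  have "subseq_embedding (\<lambda>k. h (Suc k) - Suc ?i) u (drop (Suc ?i) w)"
    unfolding subseq_embedding_def
  proof (intro conjI allI impI)
    fix i j
    assume "i < j \<and> j < length u"
    then show "h (Suc i) - Suc ?i < h (Suc j) - Suc ?i"
      using h[of 0 "Suc i"] h[of "Suc i" "Suc j"] by simp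
  next
    fix k
    assume "k < length u"
    then show "h (Suc k) - Suc ?i < length (drop (Suc ?i) w)"
      and "u ! k = drop (Suc ?i) w ! (h (Suc k) - Suc ?i)"
      using h[of 0 "Suc k"] hk[of "Suc k"] by auto
  qed
  then have "subseq (a # u) (w ! ?i # drop (Suc ?i) w)"
    using Cons.IH hk[of 0] by simp
  moreover have "w = take ?i w @ w ! ?i # drop (Suc ?i) w"
    using hk[of 0] by (simp add: id_take_nth_drop)
  ultimately show ?case by (metis list_emb_append2)
qed

lemma subseq_embeddings_subset_Pow: "subseq_embeddings u w \<subseteq> Pow {0..<length w}"
  unfolding subseq_embeddings_def subseq_embedding_def by auto

lemma finite_subseq_embeddings: "finite (subseq_embeddings u w)"
  by (rule finite_subset[OF subseq_embeddings_subset_Pow]) simp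

lemma subseq_embeddings_Cons:
  "(\<lambda>I. Suc ` I) ` subseq_embeddings u w \<subseteq> subseq_embeddings u (a # w)"
proof
  fix J
  assume "J \<in> (\<lambda>I. Suc ` I) ` subseq_embeddings u w"
  then obtain h where "J = Suc ` h ` {0..<length u}" "subseq_embedding h u w"
    unfolding subseq_embeddings_def by auto
  then show "J \<in> subseq_embeddings u (a # w)"
    unfolding subseq_embeddings_def using subseq_embedding_Cons by (fastforce simp: image_image)
qed

lemma subseq_embeddings_Cons2:
  "(\<lambda>I. insert 0 (Suc ` I)) ` subseq_embeddings u w \<subseteq> subseq_embeddings (a # u) (a # w)"
proof
  fix J
  assume "J \<in> (\<lambda>I. insert 0 (Suc ` I)) ` subseq_embeddings u w"
  then obtain h where J: "J = insert 0 (Suc ` h ` {0..<length u})" and h: "subseq_embedding h u w"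
    unfolding subseq_embeddings_def by auto
  let ?h = "\<lambda>k. case k of 0 \<Rightarrow> 0 | Suc k \<Rightarrow> Suc (h k)"
  have "?h ` {0..<length (a # u)} = J"
    unfolding J length_Cons atLeast0_lessThan_Suc_eq_insert_0 image_insert image_image by simp
  then show "J \<in> subseq_embeddings (a # u) (a # w)"
    unfolding subseq_embeddings_def using subseq_embedding_Cons2[OF h] by blast
qed

text \<open>The two families of embeddings into \<open>a # w\<close> (avoiding, resp. using, the first position)
  are disjoint, so the bound follows from the recursion by the triangle inequality.\<close>

lemma abs_subseq_mu_le_card_embeddings: "\<bar>subseq_mu u w\<bar> \<le> int (card (subseq_embeddings u w))"
proof (induction w arbitrary: u)
  case Nil
  show ?case
  proof (cases "u = []")
    case True
    have "{} \<in> subseq_embeddings [] []" unfolding subseq_embeddings_def subseq_embedding_def by auto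
    then have "card (subseq_embeddings [] []) \<ge> 1"
      using finite_subseq_embeddings by (metis One_nat_def Suc_leI card_gt_0_iff empty_iff)
    then show ?thesis using True by simp
  qed simp
next
  case (Cons a w)
  let ?S = "(\<lambda>I. Suc ` I) ` subseq_embeddings u w"
  have card_S: "card ?S = card (subseq_embeddings u w)"
    by (rule card_image) (simp add: inj_on_def inj_image_eq_iff)
  have abs_tail: "\<bar>if w \<noteq> [] \<and> hd w = a then 0 else subseq_mu u w\<bar> \<le> \<bar>subseq_mu u w\<bar>"
    by simp
  show ?case
  proof (cases "\<exists>u'. u = a # u'")
    case True
    then obtain u' where u: "u = a # u'" by blast
    let ?T = "(\<lambda>I. insert 0 (Suc ` I)) ` subseq_embeddings u' w"
    have card_T: "card ?T = card (subseq_embeddings u' w)"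
      by (rule card_image) (auto simp: inj_on_def inj_image_eq_iff insert_ident)
    have "card ?S + card ?T = card (?S \<union> ?T)"
      by (rule card_Un_disjoint[symmetric]) (auto simp: finite_subseq_embeddings)
    also have "\<dots> \<le> card (subseq_embeddings u (a # w))"
      using subseq_embeddings_Cons[of u w a] subseq_embeddings_Cons2[of u' w a] u
      by (intro card_mono finite_subseq_embeddings) auto
    finally have "card (subseq_embeddings u w) + card (subseq_embeddings u' w)
        \<le> card (subseq_embeddings u (a # w))"
      using card_S card_T by simp
    moreover have "\<bar>subseq_mu u (a # w)\<bar> \<le> \<bar>subseq_mu u' w\<bar> + \<bar>subseq_mu u w\<bar>"
      using u abs_tail by auto
    ultimately show ?thesis using Cons.IH[of u] Cons.IH[of u'] by linarith
  next
    case False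
    then have "\<bar>subseq_mu u (a # w)\<bar> \<le> \<bar>subseq_mu u w\<bar>"
      using abs_tail by (cases u) auto
    moreover have "card ?S \<le> card (subseq_embeddings u (a # w))"
      by (intro card_mono finite_subseq_embeddings subseq_embeddings_Cons)
    ultimately show ?thesis using Cons.IH[of u] card_S by linarith
  qed
qed

section \<open>Run words of permutations\<close>

definition position :: "nat list \<Rightarrow> nat \<Rightarrow> nat" where
  "position p v = (THE i. i < length p \<and> p!i = v)"

lemma nth_position:
  "distinct p \<Longrightarrow> v \<in> set p \<Longrightarrow> position p v < length p \<and> p ! position p v = v"
  unfolding position_def using distinct_Ex1[of p v] by (metis (mono_tags, lifting) theI)

lemma position_nth: "distinct p \<Longrightarrow> a < length p \<Longrightarrow> position p (p!a) = a"
  using nth_position[of p "p!a"] nth_eq_iff_index_eq by auto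

lemma is_perm_nth: "is_perm p \<Longrightarrow> a < length p \<Longrightarrow> p!a \<ge> 1 \<and> p!a \<le> length p"
  unfolding is_perm_def using nth_mem by fastforce

lemma is_perm_position:
  "is_perm p \<Longrightarrow> 1 \<le> v \<Longrightarrow> v \<le> length p \<Longrightarrow> position p v < length p \<and> p ! position p v = v"
  unfolding is_perm_def using nth_position by auto

definition run_index :: "nat list \<Rightarrow> nat \<Rightarrow> nat" where
  "run_index p i = card {j. j < i \<and> p!(Suc j) < p!j}"

lemma run_index_0[simp]: "run_index p 0 = 0" by (simp add: run_index_def)

lemma run_index_Suc: "run_index p (Suc i) = run_index p i + (if p!(Suc i) < p!i then 1 else 0)"
proof -
  have "{j. j < Suc i \<and> p!(Suc j) < p!j}
      = {j. j < i \<and> p!(Suc j) < p!j} \<union> (if p!(Suc i) < p!i then {i} else {})"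
    by (auto simp: less_Suc_eq)
  then show ?thesis unfolding run_index_def by (auto simp: card_insert_if)
qed

lemma run_index_mono: "i \<le> j \<Longrightarrow> run_index p i \<le> run_index p j"
  unfolding run_index_def by (rule card_mono) auto

lemma run_index_le_descents: "i < length p \<Longrightarrow> run_index p i \<le> descents p"
  unfolding run_index_def descents_def
  by (rule card_mono, rule finite_subset[of _ "{..<length p}"]) auto

lemma descents_eq_run_index: "length p > 0 \<Longrightarrow> descents p = run_index p (length p - 1)"
  unfolding run_index_def descents_def by (rule arg_cong[where f=card]) auto

lemma run_index_eq_imp_le:
  "a \<le> c \<Longrightarrow> c \<le> b \<Longrightarrow> run_index p a = run_index p b \<Longrightarrow> p!a \<le> p!c"
proof (induction c)
  case 0 then show ?case by simp
next
  case (Suc c)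
  show ?case
  proof (cases "a = Suc c")
    case False
    then have ac: "a \<le> c" using Suc.prems by simp
    have "run_index p a \<le> run_index p c" "run_index p c \<le> run_index p (Suc c)"
      "run_index p (Suc c) \<le> run_index p b"
      using ac Suc.prems(2) by (simp_all add: run_index_mono)
    then have "run_index p (Suc c) = run_index p c" using Suc.prems(3) by linarith
    then have "p!c \<le> p!(Suc c)" using run_index_Suc[of p c] by (auto split: if_splits)
    then show ?thesis using Suc ac by simp
  qed simp
qed

definition run_word :: "nat list \<Rightarrow> nat list" where
  "run_word p = map (\<lambda>v. run_index p (position p (Suc v))) [0..<length p]"

text \<open>\<open>V ! (x - 1)\<close> is the label of the value \<open>x\<close>; \<open>label_sorted V p\<close> says that \<open>p\<close> lists its
  values in increasing lexicographic order of (label, value).\<close>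

definition label_sorted :: "nat list \<Rightarrow> nat list \<Rightarrow> bool" where
  "label_sorted V p \<longleftrightarrow> length V = length p \<and>
     (\<forall>a<length p. \<forall>b<length p. a < b \<longleftrightarrow> (V!(p!a - 1), p!a) < (V!(p!b - 1), p!b))"

lemma run_word_nth:
  assumes "is_perm p" "a < length p"
  shows "run_word p ! (p!a - 1) = run_index p a"
proof -
  have "p!a \<ge> 1" "p!a \<le> length p" using is_perm_nth[OF assms] by auto
  then have "p!a - 1 < length p" "Suc (p!a - 1) = p!a" by linarith+
  then have "run_word p ! (p!a - 1) = run_index p (position p (p!a))" unfolding run_word_def by simp
  then show ?thesis using position_nth assms is_perm_def by auto
qed

lemma length_run_word[simp]: "length (run_word p) = length p" by (simp add: run_word_def)

lemma label_sorted_run_word: assumes "is_perm p" shows "label_sorted (run_word p) p"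
  unfolding label_sorted_def
proof (intro conjI allI impI)
  fix a b assume ab: "a < length p" "b < length p"
  have d: "distinct p" using assms is_perm_def by auto
  have fw: "(run_index p x, p!x) < (run_index p y, p!y)" if "x < y" "y < length p" for x y
  proof (cases "run_index p x = run_index p y")
    case True
    have "p!x \<le> p!y" using run_index_eq_imp_le[OF _ _ True, of y] that by simp
    moreover have "p!x \<noteq> p!y" using d that nth_eq_iff_index_eq by fastforce
    ultimately show ?thesis using True by simp
  next
    case False
    then show ?thesis using run_index_mono[of x y p] that by simp
  qed
  show "a < b \<longleftrightarrow> (run_word p ! (p!a - 1), p!a) < (run_word p ! (p!b - 1), p!b)"
    unfolding run_word_nth[OF assms ab(1)] run_word_nth[OF assms ab(2)]
    using fw[of a b] fw[of b a] ab by (metis less_asym' linorder_neqE_nat order_less_irrefl)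
qed simp

lemma run_word_le_descents: "is_perm p \<Longrightarrow> x \<in> set (run_word p) \<Longrightarrow> x \<le> descents p"
proof -
  assume p: "is_perm p" and "x \<in> set (run_word p)"
  then obtain v where v: "v < length p" "x = run_index p (position p (Suc v))"
    unfolding run_word_def by auto
  then have "position p (Suc v) < length p" using is_perm_position[OF p, of "Suc v"] by simp
  then show ?thesis using v run_index_le_descents by simp
qed

lemma label_sorted_Suc:
  assumes "label_sorted V z" "Suc q < length z"
  shows "V!(z!q - 1) \<le> V!(z!Suc q - 1) \<and> (z!Suc q < z!q \<longrightarrow> V!(z!q - 1) < V!(z!Suc q - 1))"
proof -
  have "(V!(z!q - 1), z!q) < (V!(z!Suc q - 1), z!Suc q)"
    using assms unfolding label_sorted_def by (meson Suc_lessD lessI)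
  then show ?thesis by auto
qed

lemma label_sorted_run_index:
  assumes "label_sorted V z"
  shows "p \<le> q \<Longrightarrow> q < length z \<Longrightarrow>
    run_index z q + V!(z!p - 1) \<le> run_index z p + V!(z!q - 1)"
proof (induction q)
  case 0 then show ?case by simp
next
  case (Suc q)
  show ?case
  proof (cases "p = Suc q")
    case False
    then have pq: "p \<le> q" using Suc.prems by simp
    have "V!(z!q - 1) \<le> V!(z!Suc q - 1) \<and> (z!Suc q < z!q \<longrightarrow> V!(z!q - 1) < V!(z!Suc q - 1))"
      using label_sorted_Suc[OF assms(1) Suc.prems(2)] .
    then show ?thesis using Suc pq run_index_Suc[of z q] by (auto split: if_splits)
  qed simp
qed

lemma run_index_le_label:
  assumes "label_sorted V z" "q < length z"
  shows "run_index z q \<le> V ! (z ! q - 1)"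
  using label_sorted_run_index[OF assms(1), of 0 q] assms(2) by simp

lemma is_perm_nth_pred_less: "is_perm z \<Longrightarrow> q < length z \<Longrightarrow> z ! q - 1 < length z"
  using is_perm_nth[of z q] by linarith

lemma descents_le_label_bound:
  assumes z: "is_perm z" and V: "label_sorted V z" and bound: "\<forall>x\<in>set V. x \<le> D"
  shows "descents z \<le> D"
proof (cases "length z = 0")
  case True
  then show ?thesis by (simp add: descents_def)
next
  case False
  let ?l = "length z - 1"
  have "length V = length z" using V label_sorted_def by auto
  then have "V ! (z ! ?l - 1) \<le> D"
    using bound is_perm_nth_pred_less[OF z, of ?l] False by simp
  moreover have "descents z \<le> V ! (z ! ?l - 1)"
    using descents_eq_run_index[of z] run_index_le_label[OF V, of ?l] False by simp
  ultimately show ?thesis by simp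
qed

text \<open>The run index is a lower bound for the label (\<open>run_index_le_label\<close>); it is also an upper
  bound when all labels are at most \<open>descents z\<close>, because the label must still increase at each
  of the later descents.\<close>

lemma label_sorted_eq_run_word:
  assumes z: "is_perm z" and V: "label_sorted V z" and bound: "\<forall>x\<in>set V. x \<le> descents z"
  shows "V = run_word z"
proof -
  have lV: "length V = length z" using V label_sorted_def by auto
  have label: "V ! (z ! q - 1) = run_index z q" if q: "q < length z" for q
  proof -
    let ?l = "length z - 1"
    have "V ! (z ! ?l - 1) \<in> set V"
      using lV is_perm_nth_pred_less[OF z, of ?l] q by simp
    moreover have "descents z = run_index z ?l"
      using descents_eq_run_index[of z] q by (metis gr_zeroI not_less_zero)
    ultimately have "V ! (z ! ?l - 1) \<le> run_index z ?l" using bound by metis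
    moreover have "run_index z ?l + V ! (z ! q - 1) \<le> run_index z q + V ! (z ! ?l - 1)"
      using label_sorted_run_index[OF V, of q ?l] q by simp
    ultimately have "V ! (z ! q - 1) \<le> run_index z q" by linarith
    with run_index_le_label[OF V q] show ?thesis by simp
  qed
  show ?thesis
  proof (rule nth_equalityI)
    show "length V = length (run_word z)" using lV by simp
    fix k
    assume "k < length V"
    then obtain q where q: "q < length z" "z ! q = Suc k"
      using is_perm_position[OF z, of "Suc k"] lV by auto
    show "V ! k = run_word z ! k"
      using label[OF q(1)] run_word_nth[OF z q(1)] q(2) by simp
  qed
qed

lemma label_sortedD: "label_sorted V p \<Longrightarrow> a < length p \<Longrightarrow> b < length p \<Longrightarrow>
   (a < b) = ((V!(p!a - 1), p!a) < (V!(p!b - 1), p!b))"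
  unfolding label_sorted_def by (simp del: less_prod_simp)

lemma pred_image_set_perm: "is_perm s \<Longrightarrow> (\<lambda>x. x - 1) ` set s = {0..<length s}"
  unfolding is_perm_def by (force intro: image_eqI[of _ _ "Suc _"])

definition label_key :: "nat list \<Rightarrow> nat \<Rightarrow> nat \<times> nat" where
  "label_key v k = (v!k, k)"

definition label_sort :: "nat list \<Rightarrow> nat list" where
  "label_sort v = map Suc (sort_key (label_key v) [0..<length v])"

lemma inj_label_key: "inj (label_key v)" by (rule injI) (simp add: label_key_def)

lemma is_perm_label_sort: "is_perm (label_sort v)"
proof -
  have "distinct (label_sort v)" unfolding label_sort_def by (simp add: distinct_map)
  moreover have "set (label_sort v) = {1..length (label_sort v)}"
  proof -
    have "set (label_sort v) = Suc ` {0..<length v}" unfolding label_sort_def by simp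
    also have "\<dots> = {1..length v}" by (auto simp: image_Suc_atLeastLessThan)
    finally show ?thesis unfolding label_sort_def by simp
  qed
  ultimately show ?thesis unfolding is_perm_def by simp
qed

lemma label_sorted_label_sort: "label_sorted v (label_sort v)"
proof -
  define sk where "sk = sort_key (label_key v) [0..<length v]"
  have lsk: "length sk = length v" unfolding sk_def by simp
  have "sorted (map (label_key v) sk)" unfolding sk_def by simp
  moreover have "distinct (map (label_key v) sk)" unfolding sk_def
    using inj_label_key by (simp add: distinct_map inj_on_def)
  ultimately have "sorted_wrt (<) (map (label_key v) sk)" by (simp add: strict_sorted_iff)
  then have lt: "label_key v (sk!a) < label_key v (sk!b)" if "a < b" "b < length v" for a b
    using that lsk unfolding sorted_wrt_iff_nth_less by auto
  have nth: "label_sort v ! a = Suc (sk!a)" if "a < length v" for a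
    using that lsk unfolding label_sort_def sk_def by simp
  show ?thesis unfolding label_sorted_def
  proof (intro conjI allI impI)
    show "length v = length (label_sort v)" unfolding label_sort_def by simp
    fix a b assume a: "a < length (label_sort v)" and b: "b < length (label_sort v)"
    then have a': "a < length v" and b': "b < length v" unfolding label_sort_def by auto
    let ?x = "label_sort v ! a" and ?y = "label_sort v ! b"
    have eq: "((v!(?x - 1), ?x) < (v!(?y - 1), ?y)) = (label_key v (sk!a) < label_key v (sk!b))"
      unfolding nth[OF a'] nth[OF b'] label_key_def by simp
    show "(a < b) = ((v!(?x - 1), ?x) < (v!(?y - 1), ?y))"
      unfolding eq
    proof
      assume "a < b" then show "label_key v (sk!a) < label_key v (sk!b)" using lt b' by simp
    next
      assume l: "label_key v (sk!a) < label_key v (sk!b)"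
      show "a < b"
      proof (rule ccontr)
        assume "\<not> a < b"
        then have "b < a \<or> b = a" by arith
        then show False using lt[of b a] a' l by (auto simp: less_le_not_le)
      qed
    qed
  qed
qed

lemma label_sorted_imp_eq_label_sort:
  assumes z: "is_perm z" and l: "label_sorted v z"
  shows "z = label_sort v"
proof -
  define m where "m = length z"
  have lv: "length v = m" using l label_sorted_def m_def by simp
  define zs where "zs = map (\<lambda>x. x - 1) z"
  define sk where "sk = sort_key (label_key v) [0..<length v]"
  have zv: "z!t \<ge> 1" if "t < m" for t using is_perm_nth[OF z, of t] that m_def by auto
  have "sorted_wrt (<) (map (label_key v) zs)" unfolding sorted_wrt_iff_nth_less
  proof (intro allI impI)
    fix i j assume ij: "i < j" "j < length (map (label_key v) zs)"
    then have i: "i < m" and j: "j < m" unfolding zs_def m_def by auto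
    have "(v!(z!i - 1), z!i) < (v!(z!j - 1), z!j)"
      using label_sortedD[OF l, of i j] ij i j m_def by simp
    then show "map (label_key v) zs ! i < map (label_key v) zs ! j"
      unfolding zs_def label_key_def using i j zv[OF i] zv[OF j] m_def by auto
  qed
  then have s1: "sorted (map (label_key v) zs)" "distinct (map (label_key v) zs)"
    by (simp_all add: strict_sorted_iff)
  have s2: "sorted (map (label_key v) sk)" "distinct (map (label_key v) sk)" unfolding sk_def
    using inj_label_key by (simp_all add: distinct_map inj_on_def)
  have "set zs = {0..<m}" unfolding zs_def m_def using pred_image_set_perm[OF z] by simp
  moreover have "set sk = {0..<m}" unfolding sk_def using lv by simp
  ultimately have "set (map (label_key v) zs) = set (map (label_key v) sk)" by simp
  then have "map (label_key v) zs = map (label_key v) sk"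
    using sorted_distinct_set_unique s1 s2 by blast
  then have "zs = sk" using inj_label_key by (simp add: inj_on_map_eq_map inj_on_def)
  moreover have "z = map Suc zs" unfolding zs_def
  proof (rule nth_equalityI)
    fix i assume i: "i < length z"
    then have "z!i \<ge> 1" using zv m_def by simp
    then show "z!i = map Suc (map (\<lambda>x. x - 1) z) ! i" using i by simp
  qed simp
  ultimately show ?thesis unfolding label_sort_def sk_def by simp
qed

lemma run_word_inj: "is_perm s \<Longrightarrow> is_perm z \<Longrightarrow> run_word s = run_word z \<Longrightarrow> s = z"
  using label_sorted_imp_eq_label_sort label_sorted_run_word by metis

section \<open>Pattern occurrences and subsequences of labellings\<close>

lemma sorted_list_of_set_image_mono:
  assumes "\<And>i j. i < j \<Longrightarrow> j < m \<Longrightarrow> f i < f j"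
  shows "sorted_list_of_set (f ` {0..<m}) = map f [0..<m]"
proof -
  have inj: "inj_on f {0..<m}"
  proof (rule inj_onI)
    fix x y assume xy: "x \<in> {0..<m}" "y \<in> {0..<m}" "f x = f y"
    show "x = y"
    proof (rule ccontr)
      assume "x \<noteq> y"
      then have "x < y \<or> y < x" by arith
      then show False using assms[of x y] assms[of y x] xy by auto
    qed
  qed
  have "sorted_wrt (<) (map f [0..<m])"
    unfolding sorted_wrt_iff_nth_less using assms by simp
  moreover have "set (map f [0..<m]) = f ` {0..<m}" by simp
  moreover have "length (map f [0..<m]) = card (f ` {0..<m})" using card_image[OF inj] by simp
  ultimately show ?thesis
    using sorted_list_of_set_unique[of "f ` {0..<m}" "map f [0..<m]"] by simp
qed

text \<open>The embedding sends the value \<open>x\<close> of \<open>s\<close> to the value \<open>h (x - 1) + 1\<close> of \<open>p\<close>; the positions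
  of these values in \<open>p\<close> form an occurrence because both permutations are sorted by
  (label, value) and \<open>h\<close> preserves labels and order.\<close>

lemma subseq_embedding_imp_occurrence:
  assumes p: "is_perm p" and s: "is_perm s" and lp: "label_sorted V p" and ls: "label_sorted u s"
    and h: "subseq_embedding h u V"
  shows "(\<lambda>k. position p (Suc (h k))) ` {0..<length u} \<in> occurrences s p"
proof -
  define n where "n = length p"
  define m where "m = length s"
  have lV: "length V = n" using lp label_sorted_def n_def by simp
  have lu: "length u = m" using ls label_sorted_def m_def by simp
  have hm: "\<And>i j. i < j \<Longrightarrow> j < m \<Longrightarrow> h i < h j"
    using h lu unfolding subseq_embedding_def by auto
  have hb: "\<And>k. k < m \<Longrightarrow> h k < n \<and> u!k = V!(h k)"
    using h lu lV unfolding subseq_embedding_def by auto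
  have hiff: "h i < h j \<longleftrightarrow> i < j" if "i < m" "j < m" for i j
    using hm that by (metis linorder_neqE_nat order_less_asym order_less_irrefl)
  have pp: "position p (Suc (h k)) < n \<and> p!(position p (Suc (h k))) = Suc (h k)" if "k < m" for k
    using is_perm_position[OF p, of "Suc (h k)"] hb[OF that] n_def by simp
  have sv: "s!t \<ge> 1 \<and> s!t - 1 < m" if "t < m" for t
    using is_perm_nth[OF s, of t] that m_def by auto
  define \<phi> where "\<phi> t = position p (Suc (h (s!t - 1)))" for t
  have mono: "\<phi> t < \<phi> t'" if tt: "t < t'" "t' < m" for t t'
  proof -
    let ?k = "s!t - 1" and ?k' = "s!t' - 1"
    have t: "t < m" using tt by simp
    have "(u!?k, s!t) < (u!?k', s!t')" using label_sortedD[OF ls, of t t'] tt m_def by simp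
    then have "(u!?k, ?k) < (u!?k', ?k')" using sv[OF t] sv[OF tt(2)] by auto
    then have "(V!(h ?k), h ?k) < (V!(h ?k'), h ?k')"
      using hb[of ?k] hb[of ?k'] sv[OF t] sv[OF tt(2)] hiff[of ?k ?k'] by auto
    then have "(V!(p!(\<phi> t) - 1), p!(\<phi> t)) < (V!(p!(\<phi> t') - 1), p!(\<phi> t'))"
      using pp[of ?k] pp[of ?k'] sv[OF t] sv[OF tt(2)] unfolding \<phi>_def by auto
    moreover have "\<phi> t < n" "\<phi> t' < n" using pp sv t tt unfolding \<phi>_def by auto
    ultimately show ?thesis using label_sortedD[OF lp, of "\<phi> t" "\<phi> t'"] n_def by simp
  qed
  have Seq: "(\<lambda>k. position p (Suc (h k))) ` {0..<length u} = \<phi> ` {0..<m}"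
  proof -
    have "\<phi> ` {0..<m} = (\<lambda>k. position p (Suc (h k))) ` ((\<lambda>t. s!t - 1) ` {0..<m})"
      unfolding \<phi>_def by (simp add: image_image)
    also have "(\<lambda>t. s!t - 1) ` {0..<m} = (\<lambda>x. x - 1) ` ((!) s ` {0..<m})"
      by (simp add: image_image)
    also have "\<dots> = {0..<m}" using pred_image_set_perm[OF s] nth_image[of m s] m_def by simp
    finally show ?thesis using lu by simp
  qed
  have sl: "sorted_list_of_set (\<phi> ` {0..<m}) = map \<phi> [0..<m]"
    by (rule sorted_list_of_set_image_mono) (use mono in auto)
  define w where "w = map (\<lambda>t. Suc (h (s!t - 1))) [0..<m]"
  have sw: "subword p (\<phi> ` {0..<m}) = w"
    unfolding subword_def sl w_def using pp sv unfolding \<phi>_def by simp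
  have oi: "order_iso (subword p (\<phi> ` {0..<m})) s"
    unfolding order_iso_def sw
  proof (intro conjI allI impI)
    fix i j
    assume "i < length w" "j < length w"
    then have i: "i < m" and j: "j < m" unfolding w_def by auto
    have "(Suc (h (s!i - 1)) < Suc (h (s!j - 1))) = (s!i - 1 < s!j - 1)"
      using hiff sv[OF i] sv[OF j] by simp
    also have "\<dots> = (s!i < s!j)" using sv[OF i] sv[OF j] by linarith
    finally show "(w ! i < w ! j) = (s!i < s!j)"
      using i j unfolding w_def by simp
  qed (simp add: w_def m_def)
  have sub: "\<phi> ` {0..<m} \<subseteq> {0..<length p}" using pp sv n_def unfolding \<phi>_def by auto
  show ?thesis unfolding Seq occurrences_def using sub oi by simp
qed

lemma occurrence_imp_label_sorted_subseq:
  assumes p: "is_perm p" and z: "is_perm z" and lp: "label_sorted V p"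
    and S: "S \<in> occurrences z p"
  shows "\<exists>v. label_sorted v z \<and> subseq v V"
proof -
  define n where "n = length p"
  define sl where "sl = sorted_list_of_set S"
  have Ssub: "S \<subseteq> {0..<n}" and oi: "order_iso (subword p S) z"
    using S unfolding occurrences_def n_def by auto
  have fS: "finite S" using Ssub finite_subset by blast
  define m where "m = length z"
  have lsl: "length sl = m" using oi fS unfolding order_iso_def subword_def sl_def m_def by simp
  have lV: "length V = n" using lp label_sorted_def n_def by simp
  have ssw: "sorted_wrt (<) sl" unfolding sl_def by simp
  have fm: "sl!i < sl!j" if "i < j" "j < m" for i j
    using ssw that lsl unfolding sorted_wrt_iff_nth_less by simp
  have fiff: "sl!i < sl!j \<longleftrightarrow> i < j" if "i < m" "j < m" for i j
    using fm that by (metis linorder_neqE_nat order_less_asym order_less_irrefl)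
  have fb: "sl!t < n" if "t < m" for t
  proof -
    have "sl!t \<in> set sl" using that lsl by simp
    then have "sl!t \<in> S" using fS unfolding sl_def by simp
    then show ?thesis using Ssub by auto
  qed
  have zo: "z!i < z!j \<longleftrightarrow> p!(sl!i) < p!(sl!j)" if "i < m" "j < m" for i j
    using oi that lsl unfolding order_iso_def subword_def sl_def m_def by auto
  have zv: "z!t \<ge> 1 \<and> z!t \<le> m" if "t < m" for t
    using is_perm_nth[OF z, of t] that m_def by auto
  have pv: "p!(sl!t) \<ge> 1 \<and> p!(sl!t) \<le> n" if "t < m" for t
    using is_perm_nth[OF p, of "sl!t"] fb[OF that] n_def by auto
  have zp: "position z (Suc k) < m \<and> z!(position z (Suc k)) = Suc k" if "k < m" for k
    using is_perm_position[OF z, of "Suc k"] that m_def by simp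
  \<comment> \<open>\<open>g k\<close> is the letter index in \<open>V\<close> of the value of \<open>p\<close> matched with the value \<open>k + 1\<close> of \<open>z\<close>\<close>
  define g where "g k = p!(sl!(position z (Suc k))) - 1" for k
  define v where "v = map (\<lambda>k. V!(g k)) [0..<m]"
  have "subseq_embedding g v V" unfolding subseq_embedding_def
  proof (intro conjI allI impI)
    fix i j assume ij: "i < j \<and> j < length v"
    then have i: "i < m" and j: "j < m" unfolding v_def by auto
    have "z!(position z (Suc i)) < z!(position z (Suc j))" using zp[OF i] zp[OF j] ij by simp
    then have "p!(sl!(position z (Suc i))) < p!(sl!(position z (Suc j)))"
      using zo zp[OF i] zp[OF j] by blast
    moreover have "1 \<le> p!(sl!(position z (Suc i)))" using pv zp[OF i] by blast
    ultimately show "g i < g j" unfolding g_def by (simp add: diff_less_mono)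
  next
    fix k assume "k < length v"
    then have k: "k < m" unfolding v_def by simp
    show "g k < length V" using pv[of "position z (Suc k)"] zp[OF k] lV unfolding g_def by force
    show "v!k = V!(g k)" using k unfolding v_def by simp
  qed
  then have sv: "subseq v V" by (rule subseq_embedding_imp_subseq)
  have "label_sorted v z" unfolding label_sorted_def
  proof (intro conjI allI impI)
    show "length v = length z" unfolding v_def m_def by simp
    fix a b assume a: "a < length z" and b: "b < length z"
    then have a': "a < m" and b': "b < m" using m_def by auto
    have va: "v!(z!c - 1) = V!(p!(sl!c) - 1)" if c: "c < m" for c
    proof -
      have "z!c - 1 < m" using zv[OF c] by linarith
      then have "v!(z!c - 1) = V!(g (z!c - 1))" unfolding v_def by simp
      moreover have "Suc (z!c - 1) = z!c" using zv[OF c] by simp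
      moreover have "position z (z!c) = c" using position_nth[of z c] z c m_def is_perm_def by simp
      ultimately show ?thesis unfolding g_def by simp
    qed
    have "(a < b) = (sl!a < sl!b)" using fiff[OF a' b'] by simp
    also have "\<dots> = ((V!(p!(sl!a) - 1), p!(sl!a)) < (V!(p!(sl!b) - 1), p!(sl!b)))"
      using label_sortedD[OF lp, of "sl!a" "sl!b"] fb[OF a'] fb[OF b'] n_def by simp
    also have "\<dots> = ((v!(z!a - 1), z!a) < (v!(z!b - 1), z!b))"
      unfolding va[OF a'] va[OF b'] using zo[OF a' b'] by simp
    finally show "(a < b) = ((v!(z!a - 1), z!a) < (v!(z!b - 1), z!b))" .
  qed
  then show ?thesis using sv by (intro exI[of _ v] conjI)
qed

lemma subseq_run_word_le_descents:
  assumes p: "is_perm p" and v: "subseq v (run_word p)"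
  shows "\<forall>x\<in>set v. x \<le> descents p"
proof
  fix x
  assume "x \<in> set v"
  then obtain y where "y \<in> set (run_word p)" "x = y" using list_emb_set[OF v] by blast
  then show "x \<le> descents p" using run_word_le_descents[OF p] by simp
qed

lemma patt_le_imp_label_sorted_subseq:
  assumes z: "is_perm z" and p: "is_perm p" and le: "patt_le z p"
  obtains v where "label_sorted v z" "subseq v (run_word p)" "\<forall>x\<in>set v. x \<le> descents p"
proof -
  obtain S where "S \<in> occurrences z p" using le unfolding patt_le_def by auto
  then obtain v where v: "label_sorted v z" "subseq v (run_word p)"
    using occurrence_imp_label_sorted_subseq[OF p z label_sorted_run_word[OF p]] by blast
  show ?thesis by (rule that[OF v subseq_run_word_le_descents[OF p v(2)]])
qed

lemma descents_mono:
  assumes z: "is_perm z" and p: "is_perm p" and le: "patt_le z p"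
  shows "descents z \<le> descents p"
proof -
  obtain v where v: "label_sorted v z" "subseq v (run_word p)" "\<forall>x\<in>set v. x \<le> descents p"
    by (rule patt_le_imp_label_sorted_subseq[OF assms])
  show ?thesis by (rule descents_le_label_bound[OF z v(1,3)])
qed

lemma patt_le_imp_subseq_run_word:
  assumes z: "is_perm z" and p: "is_perm p" and le: "patt_le z p" and d: "descents z = descents p"
  shows "subseq (run_word z) (run_word p)"
proof -
  obtain v where v: "label_sorted v z" "subseq v (run_word p)" "\<forall>x\<in>set v. x \<le> descents p"
    by (rule patt_le_imp_label_sorted_subseq[OF z p le])
  then have "v = run_word z" using label_sorted_eq_run_word[OF z] d by simp
  with v(2) show ?thesis by simp
qed

lemma subseq_label_sorted_imp_patt_le:
  assumes s: "is_perm s" and p: "is_perm p" and ls: "label_sorted u s" and lp: "label_sorted V p"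
    and sub: "subseq u V"
  shows "patt_le s p"
proof -
  have "\<exists>h. subseq_embedding h u V" by (rule subseq_imp_embedding[OF sub])
  then obtain h where h: "subseq_embedding h u V" ..
  have "(\<lambda>k. position p (Suc (h k))) ` {0..<length u} \<in> occurrences s p"
    by (rule subseq_embedding_imp_occurrence[OF p s lp ls h])
  then show ?thesis unfolding patt_le_def using s p by blast
qed

lemma run_word_interval_surj:
  assumes s: "is_perm s" and p: "is_perm p" and d: "descents s = descents p"
    and sv: "subseq (run_word s) v" and vp: "subseq v (run_word p)"
  shows "\<exists>z. is_perm z \<and> patt_le s z \<and> patt_le z p \<and> run_word z = v"
proof -
  let ?z = "label_sort v"
  have z: "is_perm ?z" by (rule is_perm_label_sort)
  have lz: "label_sorted v ?z" by (rule label_sorted_label_sort)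
  have le1: "patt_le s ?z"
    by (rule subseq_label_sorted_imp_patt_le[OF s z label_sorted_run_word[OF s] lz sv])
  have le2: "patt_le ?z p"
    by (rule subseq_label_sorted_imp_patt_le[OF z p lz label_sorted_run_word[OF p] vp])
  have "descents s \<le> descents ?z" "descents ?z \<le> descents p"
    using descents_mono[OF s z le1] descents_mono[OF z p le2] by auto
  then have "descents ?z = descents p" using d by simp
  then have "v = run_word ?z"
    using label_sorted_eq_run_word[OF z lz] subseq_run_word_le_descents[OF p vp] by simp
  with z le1 le2 show ?thesis by (intro exI[of _ ?z]) simp
qed

lemma card_subseq_embeddings_le_num_occ:
  assumes s: "is_perm s" and p: "is_perm p"
  shows "card (subseq_embeddings (run_word s) (run_word p)) \<le> card (occurrences s p)"
proof -
  let ?n = "length p"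
  let ?f = "\<lambda>k. position p (Suc k)"
  have injf: "inj_on ?f {0..<?n}"
  proof (rule inj_onI)
    fix x y assume xy: "x \<in> {0..<?n}" "y \<in> {0..<?n}" and eq: "?f x = ?f y"
    have a: "p!(?f x) = Suc x" using is_perm_position[OF p, of "Suc x"] xy by simp
    have b: "p!(?f y) = Suc y" using is_perm_position[OF p, of "Suc y"] xy by simp
    show "x = y" using a b eq by (metis Suc_inject)
  qed
  have inj: "inj_on (image ?f) (subseq_embeddings (run_word s) (run_word p))"
    using inj_on_image_Pow[OF injf] subseq_embeddings_subset_Pow inj_on_subset by (metis length_run_word)
  have into: "image ?f ` subseq_embeddings (run_word s) (run_word p) \<subseteq> occurrences s p"
  proof
    fix J assume "J \<in> image ?f ` subseq_embeddings (run_word s) (run_word p)"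
    then obtain h where J: "J = ?f ` h ` {0..<length (run_word s)}"
      and h: "subseq_embedding h (run_word s) (run_word p)"
      unfolding subseq_embeddings_def subseq_embedding_def by blast
    have "J = (\<lambda>k. position p (Suc (h k))) ` {0..<length (run_word s)}"
      using J by (simp add: image_image)
    then show "J \<in> occurrences s p"
      using subseq_embedding_imp_occurrence[OF p s label_sorted_run_word[OF p]
          label_sorted_run_word[OF s] h] by simp
  qed
  have fin: "finite (occurrences s p)"
    by (rule finite_subset[of _ "Pow {0..<?n}"]) (auto simp: occurrences_def)
  show ?thesis by (rule card_inj_on_le[OF inj into fin])
qed

section \<open>The interval isomorphism\<close>

lemma is_perm_descents_between:
  assumes s: "is_perm s" and p: "is_perm p" and d: "descents s = descents p"
    and sz: "patt_le s z" and zp: "patt_le z p"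
  shows "is_perm z \<and> descents z = descents p"
proof -
  have z: "is_perm z" using sz unfolding patt_le_def by simp
  have "descents s \<le> descents z" "descents z \<le> descents p"
    using descents_mono[OF s z sz] descents_mono[OF z p zp] by auto
  with z d show ?thesis by simp
qed

lemma run_word_bij_betw_interval:
  assumes s: "is_perm s" and p: "is_perm p" and d: "descents s = descents p"
  shows "bij_betw run_word {z. patt_le s z \<and> patt_less z p \<and> length z < length p}
      {v. subseq (run_word s) v \<and> subseq v (run_word p) \<and> v \<noteq> run_word p}"
    (is "bij_betw run_word ?Z ?Y")
proof (rule bij_betw_imageI)
  show "inj_on run_word ?Z"
    by (rule inj_onI) (auto simp: patt_le_def patt_less_def intro: run_word_inj)
  show "run_word ` ?Z = ?Y"
  proof (intro set_eqI iffI)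
    fix v
    assume "v \<in> run_word ` ?Z"
    then obtain z where v: "v = run_word z" and sz: "patt_le s z" and zp: "patt_le z p"
      and len: "length z < length p"
      unfolding patt_less_def by blast
    have z: "is_perm z" "descents z = descents p"
      using is_perm_descents_between[OF s p d sz zp] by auto
    have "subseq (run_word s) (run_word z)"
      using patt_le_imp_subseq_run_word[OF s z(1) sz] d z(2) by simp
    moreover have "subseq (run_word z) (run_word p)"
      by (rule patt_le_imp_subseq_run_word[OF z(1) p zp z(2)])
    moreover have "run_word z \<noteq> run_word p" using len by (metis length_run_word less_irrefl)
    ultimately show "v \<in> ?Y" using v by simp
  next
    fix v
    assume "v \<in> ?Y"
    then have sv: "subseq (run_word s) v" and vp: "subseq v (run_word p)" and ne: "v \<noteq> run_word p"
      by auto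
    obtain z where z: "is_perm z" "patt_le s z" "patt_le z p" "run_word z = v"
      using run_word_interval_surj[OF s p d sv vp] by blast
    have "length v < length (run_word p)"
      using vp ne list_emb_length subseq_same_length le_neq_implies_less by metis
    then have "length z < length p" using z(4) by (metis length_run_word)
    then show "v \<in> run_word ` ?Z" using z unfolding patt_less_def by auto
  qed
qed

declare mu.simps[simp del]

lemma mu_eq_subseq_mu:
  assumes s: "is_perm s"
  shows "is_perm p \<Longrightarrow> descents s = descents p \<Longrightarrow> mu s p = subseq_mu (run_word s) (run_word p)"
proof (induction "length p" arbitrary: p rule: less_induct)
  case less
  have p: "is_perm p" and d: "descents s = descents p" using less.prems by auto
  show ?case
  proof (cases "s = p")
    case True
    then show ?thesis by (subst mu.simps) (simp add: subseq_mu_refl)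
  next
    case ne: False
    then have ne_words: "run_word s \<noteq> run_word p" using run_word_inj[OF s p] by blast
    show ?thesis
    proof (cases "patt_le s p")
      case False
      then have "\<not> subseq (run_word s) (run_word p)"
        using subseq_label_sorted_imp_patt_le[OF s p label_sorted_run_word[OF s] label_sorted_run_word[OF p]]
        by blast
      then show ?thesis using ne False
        by (subst mu.simps) (auto dest: subseq_mu_nonzero_imp_subseq)
    next
      case True
      let ?Z = "{z. patt_le s z \<and> patt_less z p \<and> length z < length p}"
      let ?Y = "{v. subseq (run_word s) v \<and> subseq v (run_word p) \<and> v \<noteq> run_word p}"
      have "(\<Sum>z\<in>?Z. mu s z) = (\<Sum>z\<in>?Z. subseq_mu (run_word s) (run_word z))"
      proof (rule sum.cong[OF refl])
        fix z
        assume z: "z \<in> ?Z"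
        then have "is_perm z" "descents s = descents z"
          using is_perm_descents_between[OF s p d] d unfolding patt_less_def by auto
        then show "mu s z = subseq_mu (run_word s) (run_word z)" using less.hyps z by blast
      qed
      also have "\<dots> = (\<Sum>v\<in>?Y. subseq_mu (run_word s) v)"
        by (rule sum.reindex_bij_betw[OF run_word_bij_betw_interval[OF s p d]])
      also have "\<dots> = - subseq_mu (run_word s) (run_word p)"
        using subseq_mu_rec[OF ne_words patt_le_imp_subseq_run_word[OF s p True d]] by simp
      finally show ?thesis using ne True by (subst mu.simps) simp
    qed
  qed
qed

theorem mainTheorem8:
  fixes sigma pi :: "nat list"
  assumes "is_perm sigma" and "is_perm pi"
    and "descents sigma = descents pi"
  shows "\<bar>mu sigma pi\<bar> \<le> int (num_occ sigma pi)"
proof -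
  have "mu sigma pi = subseq_mu (run_word sigma) (run_word pi)"
    by (rule mu_eq_subseq_mu[OF assms])
  then have "\<bar>mu sigma pi\<bar> \<le> int (card (subseq_embeddings (run_word sigma) (run_word pi)))"
    using abs_subseq_mu_le_card_embeddings by simp
  also have "\<dots> \<le> int (num_occ sigma pi)"
    using card_subseq_embeddings_le_num_occ[OF assms(1,2)] unfolding num_occ_def by simp
  finally show ?thesis .
qed

end
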